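(* For each $\mu\in \mathcal{M}^*(X)$, the set $(\pi_{f*})^{-1}(\mu)$ consists of a single point, which we denote by $\mu_f$. The map $\mathcal{M}^*(X)\rightarrow \mathcal{M}(X_f)$ sending $\mu$ to $\mu_f$ is continuous.
   Context: Let $\Gamma$ (countably infinite) act minimally and continuously on a compact metrizable space $X$ which consists of more than one orbit. Let $x_1\in X$ have trivial stabilizer, and let $f:X\setminus\{x_1\}\to\{1,-1\}$ be continuous but not continuously extendable to $X$. McMahon's construction gives a minimal action $\Gamma\curvearrowright X_f$ on a compact metrizable space and a factor map $\pi_f:X_f\to X$ such that $\pi_f^{-1}(x)$ is one point for $x\notin\Gamma x_1$ and two points for $x\in\Gamma x_1$, and $f\circ\pi_f$ extends continuously to $X_f$. For a compact metrizable space $W$, $\mathcal{M}(W)$ denotes the space of Borel probability measures on $W$ with the weak$^*$-topology; $\mathcal{M}^*(X)$ is the set of nonatomic $\mu\in\mathcal{M}(X)$ (i.e. $\mu(\{x\})=0$ for all $x$), and $\pi_{f*}:\mathcal{M}(X_f)\to\mathcal{M}(X)$ is the continuous surjection induced by $\pi_f$. *)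

theory Defs
  imports "HOL-Analysis.Analysis" "HOL-Probability.Probability"
begin

definition prob_measures :: "'a::topological_space measure set" where
  "prob_measures = {M. sets M = sets (borel :: 'a measure) \<and> prob_space M}"

definition weak_star :: "'a::topological_space measure topology" where
  "weak_star = topology_generated_by
     {{M \<in> prob_measures. (\<integral>x. g x \<partial>M) \<in> U} | g U.
        continuous_on UNIV (g :: 'a \<Rightarrow> real) \<and> open U}"

definition nonatomic_measures :: "'a::topological_space measure set" where
  "nonatomic_measures = {M \<in> prob_measures. \<forall>x. emeasure M {x} = 0}"

definition push :: "('b::topological_space \<Rightarrow> 'a::topological_space) \<Rightarrow> 'b measure \<Rightarrow> 'a measure" where
  "push \<pi> M = distr M borel \<pi>"

definition is_action :: "('g::group_add \<Rightarrow> 'a \<Rightarrow> 'a) \<Rightarrow> bool" where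
  "is_action act \<longleftrightarrow> (\<forall>x. act 0 x = x) \<and> (\<forall>g h x. act (g + h) x = act g (act h x))"

definition orbit :: "('g \<Rightarrow> 'a \<Rightarrow> 'a) \<Rightarrow> 'a \<Rightarrow> 'a set" where
  "orbit act x = range (\<lambda>g. act g x)"

text \<open>Continuous action (\<Gamma> discrete) which is minimal (every orbit dense).\<close>
definition minimal_continuous_action :: "('g::group_add \<Rightarrow> 'a::topological_space \<Rightarrow> 'a) \<Rightarrow> bool" where
  "minimal_continuous_action act \<longleftrightarrow> is_action act \<and> (\<forall>g. continuous_on UNIV (act g))
     \<and> (\<forall>x. closure (orbit act x) = UNIV)"

end

theory Submission
  imports Defs
begin

(* Off the countable orbit E of x1 the factor map is injective, so its set-theoretic section
   inv \<pi> is Borel and continuous at every point outside E.  A nonatomic \<mu> does not charge E,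
   hence every lift \<nu> of \<mu> satisfies inv \<pi> \<circ> \<pi> = id \<nu>-almost everywhere, i.e. \<nu> is the
   push-forward of \<mu> by inv \<pi>.  For continuous g, the integral of g against that lift is the
   integral against \<mu> of the bounded, \<mu>-a.e. continuous function g \<circ> inv \<pi>; squeezing such a
   function between continuous (Lipschitz) functions with nearly the same \<mu>-integral shows
   that this integral depends weak-star continuously on nonatomic \<mu>. *)

lemma topspace_weak_star:
  "topspace (weak_star :: 'a::topological_space measure topology) = prob_measures"
proof -
  have "{M \<in> prob_measures. (\<integral>x. (\<lambda>_. 0) x \<partial>M) \<in> (UNIV :: real set)} = prob_measures"
    by simp
  moreover have "{M \<in> prob_measures. (\<integral>x. (\<lambda>_. 0) x \<partial>M) \<in> (UNIV :: real set)} \<in>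
      {{M \<in> prob_measures. (\<integral>x. g x \<partial>M) \<in> U} | g U.
        continuous_on UNIV (g :: 'a \<Rightarrow> real) \<and> open U}"
    by blast
  ultimately show ?thesis
    unfolding weak_star_def topology_generated_by_topspace by blast
qed

lemma openin_weak_star_integral:
  fixes g :: "'a::topological_space \<Rightarrow> real"
  assumes "continuous_on UNIV g" and "open U"
  shows "openin weak_star {M \<in> prob_measures. (\<integral>x. g x \<partial>M) \<in> U}"
  unfolding weak_star_def
  by (rule topology_generated_by_Basis) (use assms in blast)

lemma continuous_map_into_weak_star:
  fixes F :: "'b \<Rightarrow> 'a::topological_space measure"
  assumes into: "F ` topspace T \<subseteq> prob_measures"
    and integral_cont: "\<And>g :: 'a \<Rightarrow> real. continuous_on UNIV g \<Longrightarrow>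
      continuous_map T euclideanreal (\<lambda>t. \<integral>x. g x \<partial>F t)"
  shows "continuous_map T weak_star F"
proof -
  have "continuous_map T (topology_generated_by {{M \<in> prob_measures. (\<integral>x. g x \<partial>M) \<in> U} | g U.
      continuous_on UNIV (g :: 'a \<Rightarrow> real) \<and> open U}) F"
  proof (rule continuous_on_generated_topo)
    fix V assume "V \<in> {{M \<in> prob_measures. (\<integral>x. g x \<partial>M) \<in> U} | g U.
        continuous_on UNIV (g :: 'a \<Rightarrow> real) \<and> open U}"
    then obtain g :: "'a \<Rightarrow> real" and U
      where V: "V = {M \<in> prob_measures. (\<integral>x. g x \<partial>M) \<in> U}"
      and g: "continuous_on UNIV g" and U: "open U"
      by blast
    have "F -` V \<inter> topspace T = {t \<in> topspace T. (\<integral>x. g x \<partial>F t) \<in> U}"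
      using into unfolding V by blast
    then show "openin T (F -` V \<inter> topspace T)"
      using openin_continuous_map_preimage[OF integral_cont[OF g] iffD1[OF open_openin U]]
      by simp
  next
    show "F ` topspace T \<subseteq> \<Union> {{M \<in> prob_measures. (\<integral>x. g x \<partial>M) \<in> U} | g U.
        continuous_on UNIV (g :: 'a \<Rightarrow> real) \<and> open U}"
      using into topspace_weak_star[where 'a='a]
      unfolding weak_star_def topology_generated_by_topspace by simp
  qed
  then show ?thesis
    unfolding weak_star_def .
qed

lemma integrable_bounded_prob_measure:
  fixes h :: "'a::topological_space \<Rightarrow> real"
  assumes "\<mu> \<in> prob_measures" and "h \<in> borel_measurable borel" and "\<And>x. \<bar>h x\<bar> \<le> B"
  shows "integrable \<mu> h"
proof -
  have "sets \<mu> = sets borel" and "prob_space \<mu>"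
    using assms(1) by (auto simp: prob_measures_def)
  then show ?thesis
    using assms(2,3) measurable_cong_sets
    by (intro finite_measure.integrable_const_bound[where B=B])
      (auto simp: prob_space_def)
qed

lemma null_sets_countable_nonatomic:
  fixes A :: "'a::t1_space set"
  assumes "\<mu> \<in> nonatomic_measures" and "countable A"
  shows "A \<in> null_sets \<mu>"
proof -
  have "sets \<mu> = sets borel" and "\<And>x. emeasure \<mu> {x} = 0"
    using assms(1) by (auto simp: nonatomic_measures_def prob_measures_def)
  then have "(\<Union>x\<in>A. {x}) \<in> null_sets \<mu>"
    by (intro null_sets_UN'[OF assms(2)]) (simp add: null_sets_def)
  then show ?thesis
    by simp
qed

(* The Pasch-Hausdorff envelope: the least L-Lipschitz majorant of h. *)
definition lipschitz_envelope :: "real \<Rightarrow> ('a::metric_space \<Rightarrow> real) \<Rightarrow> 'a \<Rightarrow> real" where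
  "lipschitz_envelope L h x = (SUP y. h y - L * dist x y)"

context
  fixes h :: "'a::metric_space \<Rightarrow> real" and B L :: real
  assumes bound: "\<And>y. h y \<le> B" and nonneg: "L \<ge> 0"
begin

lemma lipschitz_envelope_term_le: "h y - L * dist x y \<le> B"
proof -
  have "0 \<le> L * dist x y"
    using nonneg by simp
  then show ?thesis
    using bound[of y] by linarith
qed

lemma bdd_above_lipschitz_envelope: "bdd_above (range (\<lambda>y. h y - L * dist x y))"
  using lipschitz_envelope_term_le by (rule bdd_aboveI2)

lemma lipschitz_envelope_ge: "h x \<le> lipschitz_envelope L h x"
  using cSUP_upper[OF UNIV_I bdd_above_lipschitz_envelope, of x x]
  by (simp add: lipschitz_envelope_def)

lemma lipschitz_envelope_le: "lipschitz_envelope L h x \<le> B"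
  unfolding lipschitz_envelope_def
  using lipschitz_envelope_term_le by (rule cSUP_least[rotated]) simp

lemma lipschitz_on_lipschitz_envelope: "L-lipschitz_on UNIV (lipschitz_envelope L h)"
proof (rule lipschitz_onI[OF _ nonneg])
  have one_sided: "lipschitz_envelope L h x \<le> lipschitz_envelope L h x' + L * dist x x'" for x x'
    unfolding lipschitz_envelope_def[of L h x]
  proof (rule cSUP_least)
    fix y
    have "h y - L * dist x' y \<le> lipschitz_envelope L h x'"
      unfolding lipschitz_envelope_def by (rule cSUP_upper[OF UNIV_I bdd_above_lipschitz_envelope])
    moreover have "L * dist x' y \<le> L * dist x y + L * dist x x'"
      using mult_left_mono[OF dist_triangle[of x' y x] nonneg]
      by (simp add: distrib_left dist_commute)
    ultimately show "h y - L * dist x y \<le> lipschitz_envelope L h x' + L * dist x x'"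
      by linarith
  qed simp
  fix x x' :: 'a
  show "dist (lipschitz_envelope L h x) (lipschitz_envelope L h x') \<le> L * dist x x'"
    using one_sided[of x x'] one_sided[of x' x] by (simp add: dist_real_def dist_commute abs_le_iff)
qed

end

lemma tendsto_lipschitz_envelope:
  fixes h :: "'a::metric_space \<Rightarrow> real"
  assumes bound: "\<And>y. h y \<le> B" and cont: "isCont h x"
  shows "(\<lambda>n. lipschitz_envelope (real n) h x) \<longlonglongrightarrow> h x"
proof (rule LIMSEQ_I)
  fix r :: real assume r: "r > 0"
  obtain d where d: "d > 0" and near: "\<And>y. dist y x < d \<Longrightarrow> dist (h y) (h x) < r / 2"
    using cont r unfolding continuous_at_eps_delta by (metis half_gt_zero)
  obtain N :: nat where N: "(B - h x) / d < real N"
    using reals_Archimedean2 by blast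
  show "\<exists>N. \<forall>n\<ge>N. norm (lipschitz_envelope (real n) h x - h x) < r"
  proof (intro exI allI impI)
    fix n assume "N \<le> n"
    then have far: "B - h x < real n * d"
      using N d by (simp add: divide_less_eq) (smt (verit) of_nat_mono mult_right_mono)
    have "lipschitz_envelope (real n) h x \<le> h x + r / 2"
      unfolding lipschitz_envelope_def
    proof (rule cSUP_least)
      fix y
      show "h y - real n * dist x y \<le> h x + r / 2"
      proof (cases "dist y x < d")
        case True
        then have "h y < h x + r / 2"
          using near[OF True] unfolding dist_real_def abs_less_iff by linarith
        moreover have "0 \<le> real n * dist x y"
          by simp
        ultimately show ?thesis
          by linarith
      next
        case False
        then have "real n * d \<le> real n * dist x y"
          by (simp add: dist_commute mult_left_mono)
        then show ?thesis
          using far bound[of y] r by linarith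
      qed
    qed simp
    moreover have "h x \<le> lipschitz_envelope (real n) h x"
      by (rule lipschitz_envelope_ge) (use bound in auto)
    ultimately show "norm (lipschitz_envelope (real n) h x - h x) < r"
      using r by simp
  qed
qed

lemma continuous_upper_approximation:
  fixes h :: "'a::metric_space \<Rightarrow> real"
  assumes "finite_measure M" and sets_M: "sets M = sets borel"
    and h_meas: "h \<in> borel_measurable borel" and bound: "\<And>x. \<bar>h x\<bar> \<le> B"
    and ae_cont: "AE x in M. isCont h x" and "e > 0"
  shows "\<exists>\<psi>. continuous_on UNIV \<psi> \<and> (\<forall>x. h x \<le> \<psi> x) \<and> (\<forall>x. \<bar>\<psi> x\<bar> \<le> B)
    \<and> (\<integral>x. \<psi> x \<partial>M) < (\<integral>x. h x \<partial>M) + e"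
proof -
  define \<psi> where "\<psi> n = lipschitz_envelope (real n) h" for n :: nat
  have upper: "h y \<le> B" for y
    using bound[of y] by linarith
  have above: "h x \<le> \<psi> n x" for n x
    unfolding \<psi>_def using upper by (rule lipschitz_envelope_ge) simp
  have below: "\<psi> n x \<le> B" for n x
    unfolding \<psi>_def using upper by (rule lipschitz_envelope_le) simp
  have \<psi>_bound: "\<bar>\<psi> n x\<bar> \<le> B" for n x
    using above[of x n] below[of n x] bound[of x] by linarith
  have "(real n)-lipschitz_on UNIV (\<psi> n)" for n
    unfolding \<psi>_def using upper by (rule lipschitz_on_lipschitz_envelope) simp
  then have \<psi>_cont: "continuous_on UNIV (\<psi> n)" for n
    by (rule lipschitz_on_continuous_on)
  have "(\<lambda>n. \<integral>x. \<psi> n x \<partial>M) \<longlonglongrightarrow> (\<integral>x. h x \<partial>M)"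
  proof (rule integral_dominated_convergence[where w="\<lambda>_. B"])
    show "h \<in> borel_measurable M"
      using h_meas sets_M by (simp cong: measurable_cong_sets)
    show "\<psi> n \<in> borel_measurable M" for n
      using borel_measurable_continuous_onI[OF \<psi>_cont] sets_M by (simp cong: measurable_cong_sets)
    show "integrable M (\<lambda>_. B)"
      using \<open>finite_measure M\<close> by (rule finite_measure.integrable_const)
    show "AE x in M. (\<lambda>n. \<psi> n x) \<longlonglongrightarrow> h x"
      using ae_cont by eventually_elim (auto simp: \<psi>_def intro: tendsto_lipschitz_envelope upper)
    show "AE x in M. norm (\<psi> n x) \<le> B" for n
      using \<psi>_bound by simp
  qed
  then have "\<forall>\<^sub>F n in sequentially. (\<integral>x. \<psi> n x \<partial>M) < (\<integral>x. h x \<partial>M) + e"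
    using \<open>e > 0\<close> by (intro order_tendstoD(2)) auto
  then obtain n where "(\<integral>x. \<psi> n x \<partial>M) < (\<integral>x. h x \<partial>M) + e"
    by (metis eventually_sequentially order_refl)
  then show ?thesis
    using \<psi>_cont above \<psi>_bound by blast
qed

lemma weak_star_nhd_integral_less:
  fixes h :: "'a::metric_space \<Rightarrow> real"
  assumes \<mu>0: "\<mu>0 \<in> prob_measures" and h_meas: "h \<in> borel_measurable borel"
    and bound: "\<And>x. \<bar>h x\<bar> \<le> B" and ae_cont: "AE x in \<mu>0. isCont h x" and "e > 0"
  shows "\<exists>W. openin weak_star W \<and> \<mu>0 \<in> W \<and> (\<forall>\<mu>\<in>W. (\<integral>x. h x \<partial>\<mu>) < (\<integral>x. h x \<partial>\<mu>0) + e)"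
proof -
  have "finite_measure \<mu>0" and "sets \<mu>0 = sets borel"
    using \<mu>0 by (auto simp: prob_measures_def prob_space_def)
  then obtain \<psi> where \<psi>_cont: "continuous_on UNIV \<psi>" and above: "\<forall>x. h x \<le> \<psi> x"
    and \<psi>_bound: "\<forall>x. \<bar>\<psi> x\<bar> \<le> B" and close: "(\<integral>x. \<psi> x \<partial>\<mu>0) < (\<integral>x. h x \<partial>\<mu>0) + e"
    using continuous_upper_approximation[OF _ _ h_meas bound ae_cont \<open>e > 0\<close>] by blast
  define W where "W = {M \<in> prob_measures. (\<integral>x. \<psi> x \<partial>M) \<in> {..< (\<integral>x. h x \<partial>\<mu>0) + e}}"
  have "(\<integral>x. h x \<partial>\<mu>) < (\<integral>x. h x \<partial>\<mu>0) + e" if "\<mu> \<in> W" for \<mu>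
  proof -
    have "\<mu> \<in> prob_measures"
      using that by (simp add: W_def)
    then have "(\<integral>x. h x \<partial>\<mu>) \<le> (\<integral>x. \<psi> x \<partial>\<mu>)"
      using h_meas bound borel_measurable_continuous_onI[OF \<psi>_cont] \<psi>_bound above
      by (intro integral_mono integrable_bounded_prob_measure) auto
    then show ?thesis
      using that by (simp add: W_def)
  qed
  moreover have "openin weak_star W"
    unfolding W_def using \<psi>_cont by (intro openin_weak_star_integral) auto
  moreover have "\<mu>0 \<in> W"
    using \<mu>0 close by (simp add: W_def)
  ultimately show ?thesis
    by blast
qed

lemma continuous_map_weak_star_integral:
  fixes h :: "'a::metric_space \<Rightarrow> real"
  assumes h_meas: "h \<in> borel_measurable borel" and bound: "\<And>x. \<bar>h x\<bar> \<le> B"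
    and ae_cont: "\<And>\<mu>. \<mu> \<in> A \<Longrightarrow> AE x in \<mu>. isCont h x"
  shows "continuous_map (subtopology weak_star A) euclideanreal (\<lambda>\<mu>. \<integral>x. h x \<partial>\<mu>)"
proof -
  have "\<exists>U. openin (subtopology weak_star A) U \<and> \<mu>0 \<in> U \<and>
      (\<forall>\<mu>\<in>U. (\<integral>x. h x \<partial>\<mu>) \<in> ball (\<integral>x. h x \<partial>\<mu>0) e)"
    if \<mu>0: "\<mu>0 \<in> A" "\<mu>0 \<in> prob_measures" and "e > 0" for \<mu>0 e
  proof -
    obtain W1 where W1: "openin weak_star W1" "\<mu>0 \<in> W1"
      and upper: "\<forall>\<mu>\<in>W1. (\<integral>x. h x \<partial>\<mu>) < (\<integral>x. h x \<partial>\<mu>0) + e"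
      using weak_star_nhd_integral_less[OF \<mu>0(2) h_meas bound ae_cont[OF \<mu>0(1)] \<open>e > 0\<close>] by blast
    obtain W2 where W2: "openin weak_star W2" "\<mu>0 \<in> W2"
      and lower: "\<forall>\<mu>\<in>W2. (\<integral>x. - h x \<partial>\<mu>) < (\<integral>x. - h x \<partial>\<mu>0) + e"
    proof (rule weak_star_nhd_integral_less[OF \<mu>0(2), THEN exE, of "\<lambda>x. - h x" B e])
      show "(\<lambda>x. - h x) \<in> borel_measurable borel" and "\<bar>- h x\<bar> \<le> B" for x
        using h_meas bound[of x] by simp_all
      show "AE x in \<mu>0. isCont (\<lambda>x. - h x) x"
        using ae_cont[OF \<mu>0(1)] by eventually_elim simp
    qed (use \<open>e > 0\<close> in blast)+
    show ?thesis
    proof (intro exI conjI ballI)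
      show "openin (subtopology weak_star A) (A \<inter> (W1 \<inter> W2))"
        using W1(1) W2(1) by (intro openin_subtopology_Int2 openin_Int)
      show "\<mu>0 \<in> A \<inter> (W1 \<inter> W2)"
        using \<mu>0 W1(2) W2(2) by blast
      fix \<mu> assume "\<mu> \<in> A \<inter> (W1 \<inter> W2)"
      then have "(\<integral>x. h x \<partial>\<mu>) < (\<integral>x. h x \<partial>\<mu>0) + e"
        and "(\<integral>x. - h x \<partial>\<mu>) < (\<integral>x. - h x \<partial>\<mu>0) + e"
        using upper lower by blast+
      then show "(\<integral>x. h x \<partial>\<mu>) \<in> ball (\<integral>x. h x \<partial>\<mu>0) e"
        by (simp add: dist_real_def abs_less_iff)
    qed
  qed
  then show ?thesis
    by (auto simp: Met_TC.continuous_map_to_metric topspace_weak_star simp flip: mtopology_is_euclidean)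
qed

lemma countable_in_sets_borel: "countable (A :: 'a::t1_space set) \<Longrightarrow> A \<in> sets borel"
  by (rule sets.countable) auto

locale injective_off_countable =
  fixes \<pi> :: "'y::t2_space \<Rightarrow> 'x::metric_space" and E :: "'x set"
  assumes compact_domain: "compact (UNIV :: 'y set)"
    and continuous: "continuous_on UNIV \<pi>"
    and surjective: "surj \<pi>"
    and countable_exceptional: "countable E"
    and unique_preimage: "\<And>x. x \<notin> E \<Longrightarrow> \<exists>!y. \<pi> y = x"
begin

lemma pi_inv: "\<pi> (inv \<pi> x) = x"
  using surjective by (rule surj_f_inv_f)

lemma inv_pi: "\<pi> y \<notin> E \<Longrightarrow> inv \<pi> (\<pi> y) = y"
  using unique_preimage pi_inv by metis

lemma closed_image: "closed C \<Longrightarrow> closed (\<pi> ` C)"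
  using compact_Int_closed[OF compact_domain, of C] continuous
  by (intro compact_imp_closed compact_continuous_image) (auto intro: continuous_on_subset)

lemma borel_measurable_inv: "inv \<pi> \<in> borel_measurable borel"
proof (rule borel_measurableI)
  fix S :: "'y set" assume "open S"
  have "x \<in> inv \<pi> -` C \<longleftrightarrow> x \<in> (\<pi> ` C - E) \<union> (inv \<pi> -` C \<inter> E)" for x C
    using inv_pi pi_inv[of x] by (cases "x \<in> E") force+
  then have "inv \<pi> -` C = (\<pi> ` C - E) \<union> (inv \<pi> -` C \<inter> E)" for C
    by blast
  then have "inv \<pi> -` (- S) \<in> sets borel"
    using closed_image[of "- S"] \<open>open S\<close> countable_exceptional
    by (metis borel_closed closed_Compl countable_in_sets_borel countable_subset inf_le2 sets.Diff sets.Un)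
  then show "inv \<pi> -` S \<inter> space borel \<in> sets borel"
    by (metis borel_comp space_borel inf_top_right vimage_Compl double_complement)
qed

lemma isCont_inv:
  assumes "x \<notin> E"
  shows "isCont (inv \<pi>) x"
  unfolding continuous_at_open
proof (intro allI impI)
  fix V assume V: "open V \<and> inv \<pi> x \<in> V"
  have "x \<notin> \<pi> ` (- V)"
    using inv_pi assms V by auto
  moreover have "open (- \<pi> ` (- V))"
    using closed_image V by (simp add: open_Compl closed_Compl)
  moreover have "inv \<pi> x' \<in> V" if "x' \<notin> \<pi> ` (- V)" for x'
    using that pi_inv by (metis ComplI imageI)
  ultimately show "\<exists>U. open U \<and> x \<in> U \<and> (\<forall>x'\<in>U. inv \<pi> x' \<in> V)"
    by blast
qed

lemma distr_inv_in_prob_measures: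
  "\<mu> \<in> prob_measures \<Longrightarrow> distr \<mu> borel (inv \<pi>) \<in> prob_measures"
  using borel_measurable_inv
  by (auto simp: prob_measures_def cong: measurable_cong_sets intro: prob_space.prob_space_distr)

lemma push_distr_inv:
  assumes "\<mu> \<in> prob_measures"
  shows "push \<pi> (distr \<mu> borel (inv \<pi>)) = \<mu>"
proof -
  have sets_\<mu>: "sets \<mu> = sets borel"
    using assms by (simp add: prob_measures_def)
  have "push \<pi> (distr \<mu> borel (inv \<pi>)) = distr \<mu> borel (\<pi> \<circ> inv \<pi>)"
    unfolding push_def using borel_measurable_inv continuous sets_\<mu>
    by (intro distr_distr) (auto intro: borel_measurable_continuous_onI cong: measurable_cong_sets)
  also have "\<dots> = \<mu>"
    using pi_inv distr_id2[OF sets_\<mu>[symmetric]] by (simp add: comp_def)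
  finally show ?thesis .
qed

lemma distr_inv_push:
  assumes \<nu>: "\<nu> \<in> prob_measures" and nonatomic: "push \<pi> \<nu> \<in> nonatomic_measures"
  shows "distr (push \<pi> \<nu>) borel (inv \<pi>) = \<nu>"
proof -
  have sets_\<nu>: "sets \<nu> = sets borel"
    using \<nu> by (simp add: prob_measures_def)
  have \<pi>_meas: "\<pi> \<in> borel_measurable \<nu>"
    using continuous sets_\<nu> by (auto intro: borel_measurable_continuous_onI cong: measurable_cong_sets)
  have "\<pi> -` E \<inter> space \<nu> \<in> null_sets \<nu>"
    using null_sets_countable_nonatomic[OF nonatomic countable_exceptional] \<pi>_meas
    by (simp add: push_def null_sets_distr_iff)
  then have "AE y in \<nu>. inv \<pi> (\<pi> y) = y"
    by (rule AE_I') (use inv_pi in blast)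
  then have "distr \<nu> borel (inv \<pi> \<circ> \<pi>) = distr \<nu> borel (\<lambda>y. y)"
    using \<pi>_meas borel_measurable_inv sets_\<nu>
    by (intro distr_cong_AE) (auto cong: measurable_cong_sets)
  then show ?thesis
    unfolding push_def using distr_distr[OF borel_measurable_inv \<pi>_meas] distr_id2[OF sets_\<nu>[symmetric]]
    by simp
qed

lemma push_eq_nonatomic_iff:
  assumes "\<mu> \<in> nonatomic_measures"
  shows "\<nu> \<in> prob_measures \<and> push \<pi> \<nu> = \<mu> \<longleftrightarrow> \<nu> = distr \<mu> borel (inv \<pi>)"
  using assms distr_inv_push distr_inv_in_prob_measures push_distr_inv
  by (auto simp: nonatomic_measures_def)

lemma continuous_map_distr_inv:
  "continuous_map (subtopology weak_star nonatomic_measures) weak_star (\<lambda>\<mu>. distr \<mu> borel (inv \<pi>))"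
proof (rule continuous_map_into_weak_star)
  show "(\<lambda>\<mu>. distr \<mu> borel (inv \<pi>)) ` topspace (subtopology weak_star nonatomic_measures)
      \<subseteq> prob_measures"
    using distr_inv_in_prob_measures by (auto simp: topspace_weak_star)
next
  fix g :: "'y \<Rightarrow> real" assume g: "continuous_on UNIV g"
  obtain B where bound: "\<And>y. \<bar>g y\<bar> \<le> B"
    using compact_imp_bounded[OF compact_continuous_image[OF g compact_domain]]
    by (auto simp: bounded_iff)
  have "continuous_map (subtopology weak_star nonatomic_measures) euclideanreal
      (\<lambda>\<mu>. \<integral>x. g (inv \<pi> x) \<partial>\<mu>)"
  proof (rule continuous_map_weak_star_integral)
    show "(\<lambda>x. g (inv \<pi> x)) \<in> borel_measurable borel"
      using borel_measurable_inv borel_measurable_continuous_onI[OF g] by measurable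
    show "\<bar>g (inv \<pi> x)\<bar> \<le> B" for x
      by (rule bound)
    show "AE x in \<mu>. isCont (\<lambda>x. g (inv \<pi> x)) x" if "\<mu> \<in> nonatomic_measures" for \<mu>
    proof (rule AE_I'[OF null_sets_countable_nonatomic[OF that countable_exceptional]])
      have "isCont (\<lambda>x. g (inv \<pi> x)) x" if "x \<notin> E" for x
        using isCont_o2[OF isCont_inv[OF that]] g continuous_on_eq_continuous_at[OF open_UNIV]
        by blast
      then show "{x \<in> space \<mu>. \<not> isCont (\<lambda>x. g (inv \<pi> x)) x} \<subseteq> E"
        by blast
    qed
  qed
  then show "continuous_map (subtopology weak_star nonatomic_measures) euclideanreal
      (\<lambda>\<mu>. \<integral>x. g x \<partial>distr \<mu> borel (inv \<pi>))"
    by (rule continuous_map_eq)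
      (auto simp: topspace_weak_star nonatomic_measures_def prob_measures_def integral_distr
        borel_measurable_continuous_onI[OF g] borel_measurable_inv cong: measurable_cong_sets)
qed

end

theorem lemma3p5:
  fixes act :: "'g::{group_add, countable} \<Rightarrow> 'x::metric_space \<Rightarrow> 'x"
    and actf :: "'g \<Rightarrow> 'y::metric_space \<Rightarrow> 'y"
    and x1 :: 'x
    and f :: "'x \<Rightarrow> real"
    and \<pi> :: "'y \<Rightarrow> 'x"
  assumes "infinite (UNIV :: 'g set)"
    and "compact (UNIV :: 'x set)"
    and "minimal_continuous_action act"
    and "\<exists>x y. orbit act x \<noteq> orbit act y"
    and "\<forall>g. act g x1 = x1 \<longrightarrow> g = 0"
    and "continuous_on (UNIV - {x1}) f"
    and "f ` (UNIV - {x1}) \<subseteq> {1, -1}"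
    and "\<not> (\<exists>F. continuous_on UNIV F \<and> (\<forall>x. x \<noteq> x1 \<longrightarrow> F x = f x))"
    and "compact (UNIV :: 'y set)"
    and "minimal_continuous_action actf"
    and "continuous_on UNIV \<pi>"
    and "surj \<pi>"
    and "\<forall>g y. \<pi> (actf g y) = act g (\<pi> y)"
    and "\<forall>x. x \<notin> orbit act x1 \<longrightarrow> card (\<pi> -` {x}) = 1"
    and "\<forall>x. x \<in> orbit act x1 \<longrightarrow> card (\<pi> -` {x}) = 2"
    and "\<exists>F. continuous_on UNIV F \<and> (\<forall>y. \<pi> y \<noteq> x1 \<longrightarrow> F y = f (\<pi> y))"
  shows "(\<forall>\<mu>\<in>nonatomic_measures. \<exists>!\<nu>. \<nu> \<in> prob_measures \<and> push \<pi> \<nu> = \<mu>)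
    \<and> continuous_map (subtopology weak_star nonatomic_measures) weak_star
        (\<lambda>\<mu>. THE \<nu>. \<nu> \<in> prob_measures \<and> push \<pi> \<nu> = \<mu>)"
proof -
  have "\<exists>!y. \<pi> y = x" if x: "x \<notin> orbit act x1" for x
  proof -
    obtain y where "\<pi> -` {x} = {y}"
      using assms(14) x by (auto simp: card_1_singleton_iff)
    then show ?thesis
      by (metis ex1I singletonD singletonI vimage_singleton_eq)
  qed
  moreover have "countable (orbit act x1)"
    unfolding orbit_def by simp
  ultimately interpret injective_off_countable \<pi> "orbit act x1"
    using assms(9,11,12) by unfold_locales
  have lift: "(THE \<nu>. \<nu> \<in> prob_measures \<and> push \<pi> \<nu> = \<mu>) = distr \<mu> borel (inv \<pi>)"
    if "\<mu> \<in> nonatomic_measures" for \<mu>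
    using push_eq_nonatomic_iff[OF that] by simp
  show ?thesis
    using push_eq_nonatomic_iff continuous_map_distr_inv
    by (auto simp: lift topspace_weak_star intro: continuous_map_eq)
qed

end
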